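(* Let $m\in\{1,2\}$, $K>0$, $\gamma=3$, and let $(\rho,u)$ be a smooth solution ($\rho>0$, $r>0$) of the radially symmetric isentropic Euler equations $$(r^m\rho)_t+(r^m\rho u)_r=0,\qquad (r^m\rho u)_t+(r^m\rho u^2)_r+r^m p_r=0,\qquad p=K\rho^\gamma,$$ in the subsonic regime $c_1<0<c_2$. Then: (i) if the 1-wave is rarefaction (R), the 2-wave can only change from compression (C) to R; (ii) if the 1-wave is C, the 2-wave can only change from R to C; (iii) if the 2-wave is R, the 1-wave can only change from R to C; (iv) if the 2-wave is C, the 1-wave can only change from C to R.
   Context: Here $h=\sqrt{K\gamma}\,\rho^{(\gamma-1)/2}$, $c_1=u-h$, $c_2=u+h$, and $$\alpha=u_r+\tfrac{2}{\gamma-1}h_r+\tfrac{m}{r}\tfrac{hu}{c_2},\qquad \beta=u_r-\tfrac{2}{\gamma-1}h_r-\tfrac{m}{r}\tfrac{hu}{c_1}.$$ The 1-wave is rarefaction (compression) at a point if $\beta>0$ ($\beta<0$); the 2-wave is rarefaction (compression) if $\alpha>0$ ($\alpha<0$). Characteristic flow maps: $\partial_t\xi(r_0,t)=c_1(\xi(r_0,t),t)$, $\partial_t\psi(r_0,t)=c_2(\psi(r_0,t),t)$, $\xi(r_0,0)=\psi(r_0,0)=r_0$. A change of the 2-wave from R to C means there are $r_0,t^*,\varepsilon>0$ such that $g(t)=\alpha(\psi(r_0,t),t)$ satisfies $g(t^* )=0$, $g>0$ on $(t^*-\varepsilon,t^* )$, $g<0$ on $(t^*,t^*+\varepsilon)$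 (from C to R: opposite signs); a change of the 1-wave is defined likewise with $\beta(\xi(r_0,t),t)$. "If the 1-wave is R then the 2-wave can only change from C to R" means no R-to-C change of the 2-wave occurs at a time $t^*$ where the 1-wave is R at the crossing point; the other items are interpreted analogously. *)

theory Defs
  imports "HOL-Analysis.Analysis"
begin

text \<open>Functions of the two variables (r,t) are modelled as maps real \<times> real \<Rightarrow> real,
  the first component being r, the second t.\<close>

fun Ck_on :: "nat \<Rightarrow> (real \<times> real) set \<Rightarrow> (real \<times> real \<Rightarrow> real) \<Rightarrow> bool" where
  "Ck_on 0 S f = continuous_on S f"
| "Ck_on (Suc k) S f =
     (\<exists>fr ft. (\<forall>x\<in>S. (f has_derivative (\<lambda>v. fr x * fst v + ft x * snd v)) (at x))
             \<and> Ck_on k S fr \<and> Ck_on k S ft)"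

definition smooth_on2 :: "(real \<times> real) set \<Rightarrow> (real \<times> real \<Rightarrow> real) \<Rightarrow> bool" where
  "smooth_on2 S f \<longleftrightarrow> (\<forall>k. Ck_on k S f)"

definition d_r :: "(real \<times> real \<Rightarrow> real) \<Rightarrow> real \<times> real \<Rightarrow> real" where
  "d_r f x = deriv (\<lambda>s. f (s, snd x)) (fst x)"

definition d_t :: "(real \<times> real \<Rightarrow> real) \<Rightarrow> real \<times> real \<Rightarrow> real" where
  "d_t f x = deriv (\<lambda>s. f (fst x, s)) (snd x)"

definition euler_radial ::
  "nat \<Rightarrow> real \<Rightarrow> real \<Rightarrow> (real \<times> real) set \<Rightarrow> (real \<times> real \<Rightarrow> real) \<Rightarrow> (real \<times> real \<Rightarrow> real) \<Rightarrow> bool" where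
  "euler_radial m K \<gamma> \<Omega> \<rho> u \<longleftrightarrow>
     (\<forall>x\<in>\<Omega>.
        d_t (\<lambda>y. fst y ^ m * \<rho> y) x + d_r (\<lambda>y. fst y ^ m * \<rho> y * u y) x = 0
      \<and> d_t (\<lambda>y. fst y ^ m * \<rho> y * u y) x + d_r (\<lambda>y. fst y ^ m * \<rho> y * (u y)^2) x
          + fst x ^ m * d_r (\<lambda>y. K * \<rho> y powr \<gamma>) x = 0)"

definition hh :: "real \<Rightarrow> real \<Rightarrow> (real \<times> real \<Rightarrow> real) \<Rightarrow> real \<times> real \<Rightarrow> real" where
  "hh K \<gamma> \<rho> x = sqrt (K * \<gamma>) * \<rho> x powr ((\<gamma> - 1) / 2)"

definition c1 :: "real \<Rightarrow> real \<Rightarrow> (real \<times> real \<Rightarrow> real) \<Rightarrow> (real \<times> real \<Rightarrow> real) \<Rightarrow> real \<times> real \<Rightarrow> real" where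
  "c1 K \<gamma> \<rho> u x = u x - hh K \<gamma> \<rho> x"

definition c2 :: "real \<Rightarrow> real \<Rightarrow> (real \<times> real \<Rightarrow> real) \<Rightarrow> (real \<times> real \<Rightarrow> real) \<Rightarrow> real \<times> real \<Rightarrow> real" where
  "c2 K \<gamma> \<rho> u x = u x + hh K \<gamma> \<rho> x"

definition alpha :: "nat \<Rightarrow> real \<Rightarrow> real \<Rightarrow> (real \<times> real \<Rightarrow> real) \<Rightarrow> (real \<times> real \<Rightarrow> real) \<Rightarrow> real \<times> real \<Rightarrow> real" where
  "alpha m K \<gamma> \<rho> u x = d_r u x + 2 / (\<gamma> - 1) * d_r (hh K \<gamma> \<rho>) x
     + real m / fst x * (hh K \<gamma> \<rho> x * u x / c2 K \<gamma> \<rho> u x)"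

definition beta :: "nat \<Rightarrow> real \<Rightarrow> real \<Rightarrow> (real \<times> real \<Rightarrow> real) \<Rightarrow> (real \<times> real \<Rightarrow> real) \<Rightarrow> real \<times> real \<Rightarrow> real" where
  "beta m K \<gamma> \<rho> u x = d_r u x - 2 / (\<gamma> - 1) * d_r (hh K \<gamma> \<rho>) x
     - real m / fst x * (hh K \<gamma> \<rho> x * u x / c1 K \<gamma> \<rho> u x)"

definition char_curve :: "(real \<times> real) set \<Rightarrow> (real \<times> real \<Rightarrow> real) \<Rightarrow> real \<Rightarrow> real set \<Rightarrow> (real \<Rightarrow> real) \<Rightarrow> bool" where
  "char_curve \<Omega> c r0 I \<psi> \<longleftrightarrow> is_interval I \<and> 0 \<in> I \<and> \<psi> 0 = r0 \<and>
     (\<forall>t\<in>I. (\<psi> t, t) \<in> \<Omega> \<and> (\<psi> has_real_derivative c (\<psi> t, t)) (at t within I))"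

text \<open>g changes sign from positive (R) to negative (C) at t with witness eps, and conversely.\<close>
definition R_to_C :: "(real \<Rightarrow> real) \<Rightarrow> real \<Rightarrow> real \<Rightarrow> bool" where
  "R_to_C g t \<epsilon> \<longleftrightarrow> \<epsilon> > 0 \<and> g t = 0 \<and> (\<forall>s\<in>{t-\<epsilon><..<t}. g s > 0) \<and> (\<forall>s\<in>{t<..<t+\<epsilon>}. g s < 0)"

definition C_to_R :: "(real \<Rightarrow> real) \<Rightarrow> real \<Rightarrow> real \<Rightarrow> bool" where
  "C_to_R g t \<epsilon> \<longleftrightarrow> \<epsilon> > 0 \<and> g t = 0 \<and> (\<forall>s\<in>{t-\<epsilon><..<t}. g s < 0) \<and> (\<forall>s\<in>{t<..<t+\<epsilon>}. g s > 0)"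

end

theory Submission
  imports Defs
begin

text \<open>For \<open>\<gamma> = 3\<close> the sound speed is \<open>h = c \<rho>\<close> with \<open>c = sqrt (3 K)\<close>, so \<open>\<alpha>\<close> and \<open>\<beta>\<close> are the
  quantities \<open>W\<^sub>c = u\<^sub>r + c \<rho>\<^sub>r + (m / r) c \<rho> u / (u + c \<rho>)\<close> for \<open>c = sqrt (3 K)\<close> and \<open>c = - sqrt (3 K)\<close>,
  and the characteristic speeds are \<open>u \<plusminus> c \<rho>\<close>. Differentiating \<open>W\<^sub>c\<close> along the characteristic
  \<open>r' = u + c \<rho>\<close> and eliminating all time derivatives with the Euler equations and their
  \<open>r\<close>-derivatives shows that at a zero of \<open>W\<^sub>c\<close> its derivative is
  \<open>m (u - c \<rho>)\<^sup>2 W\<^sub>-\<^sub>c / (2 r (u + c \<rho>))\<close>. In the subsonic regime this has the sign of \<open>W\<^sub>-\<^sub>c\<close> along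
  2-characteristics and the opposite sign along 1-characteristics, and a function cannot change
  sign at a zero against the sign of its derivative there.\<close>

section \<open>Partial derivatives in the \<open>(r, t)\<close>-plane\<close>

lemma has_real_derivative_along_path:
  fixes f :: "real \<times> real \<Rightarrow> real" and a b :: "real \<Rightarrow> real"
  assumes "(f has_derivative (\<lambda>v. fr * fst v + ft * snd v)) (at (a t, b t))"
    and "(a has_real_derivative a') (at t)" and "(b has_real_derivative b') (at t)"
  shows "((\<lambda>s. f (a s, b s)) has_real_derivative fr * a' + ft * b') (at t)"
proof -
  have "((\<lambda>s. (a s, b s)) has_derivative (\<lambda>h. (h * a', h * b'))) (at t)"
    using has_derivative_Pair[OF assms(2,3)[unfolded has_field_derivative_def]]
    by (simp add: mult.commute)
  from has_derivative_compose[OF this assms(1)]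
  have "((\<lambda>s. f (a s, b s)) has_derivative (\<lambda>h. fr * (h * a') + ft * (h * b'))) (at t)"
    by simp
  moreover have "(\<lambda>h. fr * (h * a') + ft * (h * b')) = (*) (fr * a' + ft * b')"
    by (auto simp: fun_eq_iff algebra_simps)
  ultimately show ?thesis
    unfolding has_field_derivative_def by simp
qed

lemma has_real_derivative_partial_fst:
  assumes "(f has_derivative (\<lambda>v. fr * fst v + ft * snd v)) (at x)"
  shows "((\<lambda>s. f (s, snd x)) has_real_derivative fr) (at (fst x))"
  using has_real_derivative_along_path[of f fr ft "\<lambda>s. s" "fst x" "\<lambda>_. snd x" 1 0] assms
  by (simp add: DERIV_ident)

lemma has_real_derivative_partial_snd:
  assumes "(f has_derivative (\<lambda>v. fr * fst v + ft * snd v)) (at x)"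
  shows "((\<lambda>s. f (fst x, s)) has_real_derivative ft) (at (snd x))"
  using has_real_derivative_along_path[of f fr ft "\<lambda>_. fst x" "snd x" "\<lambda>s. s" 0 1] assms
  by (simp add: DERIV_ident)

lemma d_r_eqI: "((\<lambda>s. f (s, snd x)) has_real_derivative D) (at (fst x)) \<Longrightarrow> d_r f x = D"
  unfolding d_r_def by (rule DERIV_imp_deriv)

lemma d_t_eqI: "((\<lambda>s. f (fst x, s)) has_real_derivative D) (at (snd x)) \<Longrightarrow> d_t f x = D"
  unfolding d_t_def by (rule DERIV_imp_deriv)

lemma d_r_eq: "(f has_derivative (\<lambda>v. fr * fst v + ft * snd v)) (at x) \<Longrightarrow> d_r f x = fr"
  by (rule d_r_eqI, rule has_real_derivative_partial_fst)

lemma d_t_eq: "(f has_derivative (\<lambda>v. fr * fst v + ft * snd v)) (at x) \<Longrightarrow> d_t f x = ft"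
  by (rule d_t_eqI, rule has_real_derivative_partial_snd)

lemma d_r_cong_open:
  assumes "open S" "x \<in> S" "\<forall>y\<in>S. f y = g y"
  shows "d_r f x = d_r g x"
proof -
  have "open ((\<lambda>s. (s, snd x)) -` S)"
    by (rule open_vimage[OF assms(1)]) (intro continuous_intros)
  then have "eventually (\<lambda>s. f (s, snd x) = g (s, snd x)) (nhds (fst x))"
    using assms(2,3) by (intro eventually_nhds_in_open[THEN eventually_mono]) auto
  then show ?thesis unfolding d_r_def by (rule deriv_cong_ev) simp
qed

lemma partial_fst_eq_0_if_vanishing:
  assumes "open S" "(x, y) \<in> S" "\<forall>z\<in>S. g z = 0"
    and "((\<lambda>x. g (x, y)) has_real_derivative D) (at x)"
  shows "D = 0"
proof -
  have "open ((\<lambda>x. (x, y)) -` S)"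
    by (rule open_vimage[OF assms(1)]) (intro continuous_intros)
  then have "((\<lambda>x. g (x, y)) has_real_derivative 0) (at x)"
    by (rule has_field_derivative_transform_within_open[OF DERIV_const]) (use assms in auto)
  with assms(4) show ?thesis by (rule DERIV_unique)
qed

lemma Ck_on_has_derivative:
  assumes "Ck_on (Suc k) S f" "x \<in> S"
  shows "(f has_derivative (\<lambda>v. d_r f x * fst v + d_t f x * snd v)) (at x)"
proof -
  from assms obtain fr ft where D: "(f has_derivative (\<lambda>v. fr * fst v + ft * snd v)) (at x)"
    by auto
  with d_r_eq[OF D] d_t_eq[OF D] show ?thesis by simp
qed

lemma Ck_on_transform:
  assumes "Ck_on k S f" "open S" "\<forall>x\<in>S. f x = g x"
  shows "Ck_on k S g"
proof (cases k)
  case 0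
  with assms show ?thesis by (auto intro: continuous_on_cong[THEN iffD1])
next
  case (Suc k')
  with assms(1) obtain fr ft
    where D: "\<forall>x\<in>S. (f has_derivative (\<lambda>v. fr x * fst v + ft x * snd v)) (at x)"
      and "Ck_on k' S fr" "Ck_on k' S ft"
    by auto
  moreover have "\<forall>x\<in>S. (g has_derivative (\<lambda>v. fr x * fst v + ft x * snd v)) (at x)"
    using D assms(2,3) has_derivative_transform_within_open by blast
  ultimately show ?thesis using Suc by auto
qed

lemma Ck_on_d_r:
  assumes "open S" "Ck_on (Suc k) S f"
  shows "Ck_on k S (d_r f)"
proof -
  from assms(2) obtain fr ft
    where D: "\<forall>x\<in>S. (f has_derivative (\<lambda>v. fr x * fst v + ft x * snd v)) (at x)" and "Ck_on k S fr"
    by auto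
  moreover have "\<forall>x\<in>S. fr x = d_r f x"
    using D d_r_eq by metis
  ultimately show ?thesis using Ck_on_transform assms(1) by blast
qed

lemma Ck_on_d_t:
  assumes "open S" "Ck_on (Suc k) S f"
  shows "Ck_on k S (d_t f)"
proof -
  from assms(2) obtain fr ft
    where D: "\<forall>x\<in>S. (f has_derivative (\<lambda>v. fr x * fst v + ft x * snd v)) (at x)" and "Ck_on k S ft"
    by auto
  moreover have "\<forall>x\<in>S. ft x = d_t f x"
    using D d_t_eq by metis
  ultimately show ?thesis using Ck_on_transform assms(1) by blast
qed

lemma smooth_on2_d_r: "open S \<Longrightarrow> smooth_on2 S f \<Longrightarrow> smooth_on2 S (d_r f)"
  unfolding smooth_on2_def using Ck_on_d_r by blast

lemma smooth_on2_d_t: "open S \<Longrightarrow> smooth_on2 S f \<Longrightarrow> smooth_on2 S (d_t f)"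
  unfolding smooth_on2_def using Ck_on_d_t by blast

lemma smooth_on2_has_derivative:
  "smooth_on2 S f \<Longrightarrow> x \<in> S \<Longrightarrow> (f has_derivative (\<lambda>v. d_r f x * fst v + d_t f x * snd v)) (at x)"
  unfolding smooth_on2_def using Ck_on_has_derivative by blast

lemma smooth_on2_continuous_on: "smooth_on2 S f \<Longrightarrow> continuous_on S f"
  unfolding smooth_on2_def by (metis Ck_on.simps(1))

section \<open>Symmetry of mixed partial derivatives\<close>

lemma second_difference_mean_value:
  fixes f fx fxy :: "real \<Rightarrow> real \<Rightarrow> real"
  assumes h: "h > 0"
    and fx: "\<And>x y. x \<in> {a..a+h} \<Longrightarrow> y \<in> {b..b+h} \<Longrightarrow>
      ((\<lambda>x. f x y) has_real_derivative fx x y) (at x)"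
    and fxy: "\<And>x y. x \<in> {a..a+h} \<Longrightarrow> y \<in> {b..b+h} \<Longrightarrow>
      ((\<lambda>y. fx x y) has_real_derivative fxy x y) (at y)"
  obtains x y where "x \<in> {a<..<a+h}" "y \<in> {b<..<b+h}"
    "f (a+h) (b+h) - f (a+h) b - f a (b+h) + f a b = h * h * fxy x y"
proof -
  have "\<exists>x. a < x \<and> x < a + h \<and> (f (a+h) (b+h) - f (a+h) b) - (f a (b+h) - f a b)
      = (a + h - a) * (fx x (b+h) - fx x b)"
    using h by (intro MVT2) (auto intro!: DERIV_diff fx)
  then obtain x where x: "a < x" "x < a + h"
    and "f (a+h) (b+h) - f (a+h) b - f a (b+h) + f a b = h * (fx x (b+h) - fx x b)"
    by (auto simp: algebra_simps)
  moreover have "\<exists>y. b < y \<and> y < b + h \<and> fx x (b+h) - fx x b = (b + h - b) * fxy x y"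
    using h x by (intro MVT2) (auto intro!: fxy)
  ultimately show ?thesis
    using that by auto
qed

lemma mixed_partials_eq:
  fixes f fr ft frt ftr :: "real \<times> real \<Rightarrow> real"
  assumes S: "open S" and "z \<in> S"
    and fr: "\<And>x y. (x, y) \<in> S \<Longrightarrow> ((\<lambda>x. f (x, y)) has_real_derivative fr (x, y)) (at x)"
    and ft: "\<And>x y. (x, y) \<in> S \<Longrightarrow> ((\<lambda>y. f (x, y)) has_real_derivative ft (x, y)) (at y)"
    and frt: "\<And>x y. (x, y) \<in> S \<Longrightarrow> ((\<lambda>y. fr (x, y)) has_real_derivative frt (x, y)) (at y)"
    and ftr: "\<And>x y. (x, y) \<in> S \<Longrightarrow> ((\<lambda>x. ft (x, y)) has_real_derivative ftr (x, y)) (at x)"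
    and "continuous_on S frt" "continuous_on S ftr"
  shows "frt z = ftr z"
proof -
  txt \<open>On a small square at \<open>z\<close> the second difference of \<open>f\<close> is \<open>h\<^sup>2 frt\<close> at one point and \<open>h\<^sup>2 ftr\<close>
    at another; continuity then forces \<open>frt z = ftr z\<close>.\<close>
  obtain a b where z: "z = (a, b)" by fastforce
  have bound: "\<bar>frt z - ftr z\<bar> < 2 * e" if e: "e > 0" for e
  proof -
    have "isCont frt z" "isCont ftr z"
      using assms(2,7,8) S continuous_on_eq_continuous_at by blast+
    then obtain d1 d2 where d: "d1 > 0" "\<forall>w. dist w z < d1 \<longrightarrow> dist (frt w) (frt z) < e"
        "d2 > 0" "\<forall>w. dist w z < d2 \<longrightarrow> dist (ftr w) (ftr z) < e"
      using e unfolding continuous_at_eps_delta by blast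
    obtain d0 where d0: "d0 > 0" "ball z d0 \<subseteq> S"
      using S assms(2) open_contains_ball by blast
    define h where "h = min d0 (min d1 d2) / 3"
    have h: "h > 0" using d d0 by (simp add: h_def)
    have near: "dist (x, y) z < min d0 (min d1 d2)" if "x \<in> {a..a+h}" "y \<in> {b..b+h}" for x y
    proof -
      have "dist (x, y) z \<le> \<bar>dist x a\<bar> + \<bar>dist y b\<bar>"
        unfolding z dist_Pair_Pair by (rule sqrt_sum_squares_le_sum_abs)
      also have "\<dots> \<le> 2 * h" using that by (simp add: dist_real_def)
      finally show ?thesis using h unfolding h_def by linarith
    qed
    have inS: "(x, y) \<in> S" if "x \<in> {a..a+h}" "y \<in> {b..b+h}" for x y
      using near[OF that] d0(2) by (auto simp: dist_commute subset_iff)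
    obtain x y where xy: "x \<in> {a<..<a+h}" "y \<in> {b<..<b+h}"
      and \<Delta>: "f (a+h, b+h) - f (a+h, b) - f (a, b+h) + f (a, b) = h * h * frt (x, y)"
      using second_difference_mean_value[of h a b "\<lambda>x y. f (x, y)" "\<lambda>x y. fr (x, y)"
          "\<lambda>x y. frt (x, y)"] h inS fr frt by blast
    obtain y' x' where xy': "y' \<in> {b<..<b+h}" "x' \<in> {a<..<a+h}"
      and \<Delta>': "f (a+h, b+h) - f (a, b+h) - f (a+h, b) + f (a, b) = h * h * ftr (x', y')"
      using second_difference_mean_value[of h b a "\<lambda>y x. f (x, y)" "\<lambda>y x. ft (x, y)"
          "\<lambda>y x. ftr (x, y)"] h inS ft ftr by blast
    have "h * h * frt (x, y) = h * h * ftr (x', y')"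
      using \<Delta> \<Delta>' by linarith
    then have "frt (x, y) = ftr (x', y')"
      using h by simp
    moreover have "dist (frt (x, y)) (frt z) < e" "dist (ftr (x', y')) (ftr z) < e"
      using near xy xy' d by auto
    ultimately show ?thesis by (simp add: dist_real_def)
  qed
  have "\<bar>frt z - ftr z\<bar> \<le> 0"
  proof (rule field_le_epsilon)
    fix e :: real
    assume "e > 0"
    then show "\<bar>frt z - ftr z\<bar> \<le> 0 + e" using bound[of "e / 2"] by simp
  qed
  then show ?thesis by simp
qed

lemma smooth_on2_partial_fst:
  "smooth_on2 S f \<Longrightarrow> (x, y) \<in> S \<Longrightarrow> ((\<lambda>x. f (x, y)) has_real_derivative d_r f (x, y)) (at x)"
  using has_real_derivative_partial_fst[OF smooth_on2_has_derivative] by fastforce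

lemma smooth_on2_partial_snd:
  "smooth_on2 S f \<Longrightarrow> (x, y) \<in> S \<Longrightarrow> ((\<lambda>y. f (x, y)) has_real_derivative d_t f (x, y)) (at y)"
  using has_real_derivative_partial_snd[OF smooth_on2_has_derivative] by fastforce

lemma smooth_on2_d_t_d_r:
  assumes "open S" "smooth_on2 S f" "x \<in> S"
  shows "d_t (d_r f) x = d_r (d_t f) x"
proof -
  have r: "smooth_on2 S (d_r f)" and t: "smooth_on2 S (d_t f)"
    using assms smooth_on2_d_r smooth_on2_d_t by auto
  have "continuous_on S (d_t (d_r f))" "continuous_on S (d_r (d_t f))"
    using assms(1) r t smooth_on2_d_r smooth_on2_d_t smooth_on2_continuous_on by blast+
  then show ?thesis
    by (intro mixed_partials_eq[OF assms(1,3), where f = f and fr = "d_r f" and ft = "d_t f"])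
      (auto intro: smooth_on2_partial_fst[OF assms(2)] smooth_on2_partial_snd[OF assms(2)]
        smooth_on2_partial_snd[OF r] smooth_on2_partial_fst[OF t])
qed

lemma smooth_on2_along_path:
  assumes "smooth_on2 S f" "(\<psi> t, t) \<in> S" "(\<psi> has_real_derivative p) (at t)"
  shows "((\<lambda>s. f (\<psi> s, s)) has_real_derivative d_r f (\<psi> t, t) * p + d_t f (\<psi> t, t)) (at t)"
  using has_real_derivative_along_path[OF smooth_on2_has_derivative[OF assms(1,2)] assms(3) DERIV_ident]
  by simp

section \<open>The Euler equations along characteristics\<close>

text \<open>The form \<open>r ^ m / r\<close> rather than \<open>r ^ (m - 1)\<close> lets the Euler equations be divided by \<open>r ^ m\<close>
  without a case split on \<open>m\<close>.\<close>

lemma has_real_derivative_power_div: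
  fixes r :: real
  assumes "r \<noteq> 0"
  shows "((\<lambda>s. s ^ m) has_real_derivative real m * r ^ m / r) (at r)"
proof -
  have "real m * r ^ (m - 1) = real m * r ^ m / r"
    using assms by (cases m) auto
  then show ?thesis using DERIV_pow[of m r] by simp
qed

lemma euler_radial_nonconservative:
  fixes \<rho> u :: "real \<times> real \<Rightarrow> real"
  assumes euler: "euler_radial m K \<gamma> \<Omega> \<rho> u" and x: "x \<in> \<Omega>" and r: "fst x > 0" and pos: "\<rho> x > 0"
    and \<rho>: "(\<rho> has_derivative (\<lambda>v. d_r \<rho> x * fst v + d_t \<rho> x * snd v)) (at x)"
    and u: "(u has_derivative (\<lambda>v. d_r u x * fst v + d_t u x * snd v)) (at x)"
  shows "d_t \<rho> x + u x * d_r \<rho> x + \<rho> x * d_r u x + real m * \<rho> x * u x / fst x = 0" (is "?mass = 0")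
    and "\<rho> x * (d_t u x + u x * d_r u x) + K * \<gamma> * \<rho> x powr (\<gamma> - 1) * d_r \<rho> x = 0"
      (is "?momentum = 0")
proof -
  obtain r t where xrt: "x = (r, t)" by fastforce
  note \<rho>r = has_real_derivative_partial_fst[OF \<rho>, unfolded xrt, simplified]
   and \<rho>t = has_real_derivative_partial_snd[OF \<rho>, unfolded xrt, simplified]
   and ur = has_real_derivative_partial_fst[OF u, unfolded xrt, simplified]
   and ut = has_real_derivative_partial_snd[OF u, unfolded xrt, simplified]
   and rm = has_real_derivative_power_div[of r m]
  have "d_t (\<lambda>y. fst y ^ m * \<rho> y) x = r ^ m * d_t \<rho> x"
    unfolding xrt by (rule d_t_eqI) (auto intro!: derivative_eq_intros \<rho>t)
  moreover have "d_r (\<lambda>y. fst y ^ m * \<rho> y * u y) x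
      = (real m * r ^ m / r * \<rho> x + r ^ m * d_r \<rho> x) * u x + r ^ m * \<rho> x * d_r u x"
    unfolding xrt using DERIV_mult[OF DERIV_mult[OF rm \<rho>r] ur] r
    by (intro d_r_eqI) (simp add: xrt algebra_simps)
  moreover have "d_t (\<lambda>y. fst y ^ m * \<rho> y * u y) x = r ^ m * (d_t \<rho> x * u x + \<rho> x * d_t u x)"
    unfolding xrt by (rule d_t_eqI) (auto intro!: derivative_eq_intros \<rho>t ut simp: algebra_simps)
  moreover have "d_r (\<lambda>y. fst y ^ m * \<rho> y * (u y)\<^sup>2) x
      = (real m * r ^ m / r * \<rho> x + r ^ m * d_r \<rho> x) * (u x)\<^sup>2 + r ^ m * \<rho> x * (2 * u x * d_r u x)"
    unfolding xrt using DERIV_mult[OF DERIV_mult[OF rm \<rho>r] DERIV_power[OF ur, of 2]] r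
    by (intro d_r_eqI) (simp add: xrt algebra_simps)
  moreover have "d_r (\<lambda>y. K * \<rho> y powr \<gamma>) x = K * \<gamma> * \<rho> x powr (\<gamma> - 1) * d_r \<rho> x"
    unfolding xrt using pos
    by (intro d_r_eqI) (auto intro!: derivative_eq_intros \<rho>r simp: xrt)
  moreover have "d_t (\<lambda>y. fst y ^ m * \<rho> y) x + d_r (\<lambda>y. fst y ^ m * \<rho> y * u y) x = 0"
    and "d_t (\<lambda>y. fst y ^ m * \<rho> y * u y) x + d_r (\<lambda>y. fst y ^ m * \<rho> y * (u y)\<^sup>2) x
      + fst x ^ m * d_r (\<lambda>y. K * \<rho> y powr \<gamma>) x = 0"
    using euler x unfolding euler_radial_def by blast+
  ultimately have "r ^ m * ?mass = 0" "r ^ m * (?momentum + u x * ?mass) = 0"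
    by (simp_all add: xrt field_simps power2_eq_square)
  then show "?mass = 0" "?momentum = 0"
    using r by (simp_all add: xrt)
qed

lemma R_to_C_deriv_nonpos:
  assumes "R_to_C g t \<epsilon>" "(g has_real_derivative D) (at t)"
  shows "D \<le> 0"
proof (rule ccontr)
  assume "\<not> D \<le> 0"
  then obtain d where d: "d > 0" "\<forall>h>0. h < d \<longrightarrow> g (t - h) < g t"
    using DERIV_pos_inc_left[OF assms(2)] by auto
  define h where "h = min d \<epsilon> / 2"
  have h: "h > 0" "h < d" "h < \<epsilon>"
    using d assms(1) unfolding R_to_C_def h_def by auto
  then have "g (t - h) < g t"
    using d by blast
  moreover have "g t = 0" "g (t - h) > 0"
    using assms(1) h unfolding R_to_C_def by auto
  ultimately show False by simp
qed

lemma C_to_R_deriv_nonneg: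
  assumes "C_to_R g t \<epsilon>" "(g has_real_derivative D) (at t)"
  shows "D \<ge> 0"
proof -
  have "R_to_C (\<lambda>s. - g s) t \<epsilon>"
    using assms(1) unfolding C_to_R_def R_to_C_def by auto
  from R_to_C_deriv_nonpos[OF this DERIV_minus[OF assms(2)]] show ?thesis by simp
qed

lemma char_curve_has_real_derivative:
  assumes "char_curve \<Omega> v r0 I \<psi>" "{t-\<epsilon><..<t+\<epsilon>} \<subseteq> I" "\<epsilon> > 0"
  shows "(\<psi> has_real_derivative v (\<psi> t, t)) (at t)"
proof -
  have t: "t \<in> {t-\<epsilon><..<t+\<epsilon>}" using assms(3) by simp
  with assms(1,2) have "(\<psi> has_real_derivative v (\<psi> t, t)) (at t within I)"
    unfolding char_curve_def by blast
  moreover have "at t within I = at t"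
    by (rule at_within_open_subset[OF t open_greaterThanLessThan assms(2)])
  ultimately show ?thesis by simp
qed

lemma riemann_gradient_transport_identity:
  fixes m c r \<rho> u \<rho>r \<rho>t ur ut \<rho>rr \<rho>rt urr urt :: real
  assumes "r \<noteq> 0" "u + c * \<rho> \<noteq> 0" "u - c * \<rho> \<noteq> 0"
    and mass: "\<rho>t + u * \<rho>r + \<rho> * ur + m * \<rho> * u / r = 0"
    and momentum: "ut + u * ur + c\<^sup>2 * \<rho> * \<rho>r = 0"
    and mass_r: "\<rho>rt + u * \<rho>rr + 2 * \<rho>r * ur + \<rho> * urr + m * ((\<rho>r * u + \<rho> * ur) / r - \<rho> * u / r\<^sup>2) = 0"
    and momentum_r: "urt + ur\<^sup>2 + u * urr + c\<^sup>2 * (\<rho>r\<^sup>2 + \<rho> * \<rho>rr) = 0"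
    and critical: "ur + c * \<rho>r + m / r * (c * \<rho> * u / (u + c * \<rho>)) = 0"
  shows "(urr * (u + c * \<rho>) + urt) + c * (\<rho>rr * (u + c * \<rho>) + \<rho>rt)
      + m * (c * ((\<rho>r * (u + c * \<rho>) + \<rho>t) * u + \<rho> * (ur * (u + c * \<rho>) + ut)) / (r * (u + c * \<rho>))
        - c * \<rho> * u * ((ur * (u + c * \<rho>) + ut) + c * (\<rho>r * (u + c * \<rho>) + \<rho>t)) / (r * (u + c * \<rho>)\<^sup>2)
        - c * \<rho> * u / r\<^sup>2)
    = m * (u - c * \<rho>)\<^sup>2 * (ur + - c * \<rho>r + m / r * (- c * \<rho> * u / (u + - c * \<rho>)))
      / (2 * r * (u + c * \<rho>))"
proof -
  txt \<open>Solve the hypotheses for the derivatives that carry a \<open>t\<close> and for \<open>ur\<close>; what remains is a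
    polynomial identity in the inverses of \<open>r\<close>, \<open>u + c \<rho>\<close> and \<open>u - c \<rho>\<close>.\<close>
  define P Q R where "P = 1 / (u + c * \<rho>)" and "Q = 1 / (u + - c * \<rho>)" and "R = 1 / r"
  have inverses: "(u + c * \<rho>) * P = 1" "(u + - c * \<rho>) * Q = 1" "r * R = 1"
    using assms(1-3) by (simp_all add: P_def Q_def R_def)
  have divisions: "\<And>a. a / (u + c * \<rho>) = a * P" "\<And>a. a / (u + - c * \<rho>) = a * Q" "\<And>a. a / r = a * R"
    "\<And>a. a / (r * (u + c * \<rho>)) = a * R * P" "\<And>a. a / (r * (u + c * \<rho>)\<^sup>2) = a * R * P\<^sup>2"
    "\<And>a. a / r\<^sup>2 = a * R\<^sup>2" "\<And>a. a / (2 * r * (u + c * \<rho>)) = a * R * P / 2"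
    by (simp_all add: P_def Q_def R_def power2_eq_square)
  have ur: "ur = - c * \<rho>r - m * c * \<rho> * u * R * P"
    using critical unfolding divisions by (simp add: algebra_simps)
  have \<rho>t: "\<rho>t = - u * \<rho>r - \<rho> * ur - m * \<rho> * u * R"
    using mass unfolding divisions by simp
  have ut: "ut = - u * ur - c\<^sup>2 * \<rho> * \<rho>r"
    using momentum by simp
  have \<rho>rt: "\<rho>rt = - u * \<rho>rr - 2 * \<rho>r * ur - \<rho> * urr - m * ((\<rho>r * u + \<rho> * ur) * R - \<rho> * u * R\<^sup>2)"
    using mass_r unfolding divisions by simp
  have urt: "urt = - ur\<^sup>2 - u * urr - c\<^sup>2 * (\<rho>r\<^sup>2 + \<rho> * \<rho>rr)"
    using momentum_r by simp
  show ?thesis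
    unfolding divisions urt \<rho>rt ut \<rho>t unfolding ur using inverses by algebra
qed

lemma has_real_derivative_gradient_form:
  fixes A B P U W R :: "real \<Rightarrow> real"
  assumes "(A has_real_derivative A') (at t)" "(B has_real_derivative B') (at t)"
    and "(P has_real_derivative P') (at t)" "(U has_real_derivative U') (at t)"
    and "(W has_real_derivative W') (at t)" "(R has_real_derivative W t) (at t)"
    and "R t \<noteq> 0" "W t \<noteq> 0"
  shows "((\<lambda>s. A s + c * B s + m / R s * (c * P s * U s / W s)) has_real_derivative
    A' + c * B' + m * (c * (P' * U t + P t * U') / (R t * W t)
      - c * P t * U t * W' / (R t * (W t)\<^sup>2) - c * P t * U t / (R t)\<^sup>2)) (at t)"
  using assms by (auto intro!: derivative_eq_intros simp: field_simps power2_eq_square)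

definition riemann_gradient ::
  "nat \<Rightarrow> real \<Rightarrow> (real \<times> real \<Rightarrow> real) \<Rightarrow> (real \<times> real \<Rightarrow> real) \<Rightarrow> real \<times> real \<Rightarrow> real" where
  "riemann_gradient m c \<rho> u x = d_r u x + c * d_r \<rho> x + real m / fst x * (c * \<rho> x * u x / (u x + c * \<rho> x))"

lemma hh_gamma3:
  assumes "\<forall>x\<in>\<Omega>. \<rho> x > 0" "x \<in> \<Omega>"
  shows "hh K 3 \<rho> x = sqrt (K * 3) * \<rho> x"
  using assms(1)[rule_format, OF assms(2)] by (simp add: hh_def)

lemma d_r_hh_gamma3:
  assumes "open \<Omega>" "\<forall>x\<in>\<Omega>. \<rho> x > 0" "smooth_on2 \<Omega> \<rho>" "x \<in> \<Omega>"
  shows "d_r (hh K 3 \<rho>) x = sqrt (K * 3) * d_r \<rho> x"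
proof -
  have "d_r (hh K 3 \<rho>) x = d_r (\<lambda>y. sqrt (K * 3) * \<rho> y) x"
    using assms(2) by (intro d_r_cong_open[OF assms(1,4)]) (simp add: hh_gamma3)
  also have "\<dots> = sqrt (K * 3) * d_r \<rho> x"
    using DERIV_cmult[OF smooth_on2_partial_fst[OF assms(3), of "fst x" "snd x"]] assms(4)
    by (intro d_r_eqI) simp
  finally show ?thesis .
qed

lemma gamma3_wave_coefficients:
  assumes "open \<Omega>" "\<forall>x\<in>\<Omega>. \<rho> x > 0" "smooth_on2 \<Omega> \<rho>"
  shows "\<forall>x\<in>\<Omega>. alpha m K 3 \<rho> u x = riemann_gradient m (sqrt (K * 3)) \<rho> u x"
    and "\<forall>x\<in>\<Omega>. beta m K 3 \<rho> u x = riemann_gradient m (- sqrt (K * 3)) \<rho> u x"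
    and "\<forall>x\<in>\<Omega>. c2 K 3 \<rho> u x = u x + sqrt (K * 3) * \<rho> x"
    and "\<forall>x\<in>\<Omega>. c1 K 3 \<rho> u x = u x + - sqrt (K * 3) * \<rho> x"
  using d_r_hh_gamma3[OF assms] hh_gamma3[OF assms(2)]
  by (simp_all add: alpha_def beta_def c1_def c2_def riemann_gradient_def)

text \<open>The sign of \<open>c\<close> is free: \<open>c = sqrt (3 K)\<close> describes the 2-wave, \<open>c = - sqrt (3 K)\<close> the 1-wave.\<close>

locale euler_gamma3_solution =
  fixes m :: nat and K c :: real and \<Omega> :: "(real \<times> real) set" and \<rho> u :: "real \<times> real \<Rightarrow> real"
  assumes open_domain: "open \<Omega>"
    and radius_pos: "\<And>x. x \<in> \<Omega> \<Longrightarrow> fst x > 0"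
    and density_pos: "\<And>x. x \<in> \<Omega> \<Longrightarrow> \<rho> x > 0"
    and smooth_density: "smooth_on2 \<Omega> \<rho>"
    and smooth_velocity: "smooth_on2 \<Omega> u"
    and euler: "euler_radial m K 3 \<Omega> \<rho> u"
    and sound_speed: "c\<^sup>2 = 3 * K"
    and non_sonic: "\<And>x. x \<in> \<Omega> \<Longrightarrow> u x + c * \<rho> x \<noteq> 0 \<and> u x - c * \<rho> x \<noteq> 0"
begin

lemma smooth_first_partials:
  "smooth_on2 \<Omega> (d_r \<rho>)" "smooth_on2 \<Omega> (d_t \<rho>)" "smooth_on2 \<Omega> (d_r u)" "smooth_on2 \<Omega> (d_t u)"
  using open_domain smooth_density smooth_velocity smooth_on2_d_r smooth_on2_d_t by auto

lemma mass_eq: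
  "x \<in> \<Omega> \<Longrightarrow> d_t \<rho> x + u x * d_r \<rho> x + \<rho> x * d_r u x + real m * \<rho> x * u x / fst x = 0"
  using euler_radial_nonconservative(1)[OF euler] radius_pos density_pos
    smooth_on2_has_derivative[OF smooth_density] smooth_on2_has_derivative[OF smooth_velocity]
  by blast

lemma momentum_eq:
  assumes "x \<in> \<Omega>"
  shows "d_t u x + u x * d_r u x + c\<^sup>2 * \<rho> x * d_r \<rho> x = 0"
proof -
  have "\<rho> x * (d_t u x + u x * d_r u x) + K * 3 * \<rho> x powr (3 - 1) * d_r \<rho> x = 0"
    using euler_radial_nonconservative(2)[OF euler assms] assms radius_pos density_pos
      smooth_on2_has_derivative[OF smooth_density] smooth_on2_has_derivative[OF smooth_velocity]
    by blast
  then have "\<rho> x * (d_t u x + u x * d_r u x + c\<^sup>2 * \<rho> x * d_r \<rho> x) = 0"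
    using density_pos[OF assms] sound_speed by (simp add: algebra_simps power2_eq_square)
  then show ?thesis
    using density_pos[OF assms] by simp
qed

lemma mass_eq_d_r:
  assumes x: "x \<in> \<Omega>"
  shows "d_t (d_r \<rho>) x + u x * d_r (d_r \<rho>) x + 2 * d_r \<rho> x * d_r u x + \<rho> x * d_r (d_r u) x
    + real m * ((d_r \<rho> x * u x + \<rho> x * d_r u x) / fst x - \<rho> x * u x / (fst x)\<^sup>2) = 0"
proof -
  obtain r t where xrt: "x = (r, t)" by fastforce
  have r: "r > 0" using radius_pos[OF x] by (simp add: xrt)
  note partial = smooth_on2_partial_fst[OF _ x[unfolded xrt]]
  have "((\<lambda>s. d_t \<rho> (s, t) + u (s, t) * d_r \<rho> (s, t) + \<rho> (s, t) * d_r u (s, t)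
      + real m * \<rho> (s, t) * u (s, t) / s) has_real_derivative
      d_r (d_t \<rho>) x + u x * d_r (d_r \<rho>) x + 2 * d_r \<rho> x * d_r u x + \<rho> x * d_r (d_r u) x
      + real m * ((d_r \<rho> x * u x + \<rho> x * d_r u x) / fst x - \<rho> x * u x / (fst x)\<^sup>2)) (at r)"
    using r by (auto intro!: derivative_eq_intros partial smooth_first_partials smooth_density
        smooth_velocity simp: xrt field_simps power2_eq_square)
  moreover have "\<forall>y\<in>\<Omega>. d_t \<rho> y + u y * d_r \<rho> y + \<rho> y * d_r u y + real m * \<rho> y * u y / fst y = 0"
    using mass_eq by blast
  ultimately have "d_r (d_t \<rho>) x + u x * d_r (d_r \<rho>) x + 2 * d_r \<rho> x * d_r u x + \<rho> x * d_r (d_r u) x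
      + real m * ((d_r \<rho> x * u x + \<rho> x * d_r u x) / fst x - \<rho> x * u x / (fst x)\<^sup>2) = 0"
    using partial_fst_eq_0_if_vanishing[OF open_domain x[unfolded xrt]] by fastforce
  then show ?thesis
    using smooth_on2_d_t_d_r[OF open_domain smooth_density x] by simp
qed

lemma momentum_eq_d_r:
  assumes x: "x \<in> \<Omega>"
  shows "d_t (d_r u) x + (d_r u x)\<^sup>2 + u x * d_r (d_r u) x + c\<^sup>2 * ((d_r \<rho> x)\<^sup>2 + \<rho> x * d_r (d_r \<rho>) x) = 0"
proof -
  obtain r t where xrt: "x = (r, t)" by fastforce
  note partial = smooth_on2_partial_fst[OF _ x[unfolded xrt]]
  have "((\<lambda>s. d_t u (s, t) + u (s, t) * d_r u (s, t) + c\<^sup>2 * \<rho> (s, t) * d_r \<rho> (s, t)) has_real_derivative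
      d_r (d_t u) x + (d_r u x)\<^sup>2 + u x * d_r (d_r u) x + c\<^sup>2 * ((d_r \<rho> x)\<^sup>2 + \<rho> x * d_r (d_r \<rho>) x)) (at r)"
    by (auto intro!: derivative_eq_intros partial smooth_first_partials smooth_density
        smooth_velocity simp: xrt algebra_simps power2_eq_square)
  moreover have "\<forall>y\<in>\<Omega>. d_t u y + u y * d_r u y + c\<^sup>2 * \<rho> y * d_r \<rho> y = 0"
    using momentum_eq by blast
  ultimately have "d_r (d_t u) x + (d_r u x)\<^sup>2 + u x * d_r (d_r u) x + c\<^sup>2 * ((d_r \<rho> x)\<^sup>2 + \<rho> x * d_r (d_r \<rho>) x) = 0"
    using partial_fst_eq_0_if_vanishing[OF open_domain x[unfolded xrt]] by fastforce
  then show ?thesis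
    using smooth_on2_d_t_d_r[OF open_domain smooth_velocity x] by simp
qed

lemma riemann_gradient_transport:
  assumes x: "(\<psi> t, t) \<in> \<Omega>"
    and \<psi>: "(\<psi> has_real_derivative u (\<psi> t, t) + c * \<rho> (\<psi> t, t)) (at t)"
    and critical: "riemann_gradient m c \<rho> u (\<psi> t, t) = 0"
  shows "((\<lambda>s. riemann_gradient m c \<rho> u (\<psi> s, s)) has_real_derivative
      real m * (u (\<psi> t, t) - c * \<rho> (\<psi> t, t))\<^sup>2 * riemann_gradient m (- c) \<rho> u (\<psi> t, t)
      / (2 * \<psi> t * (u (\<psi> t, t) + c * \<rho> (\<psi> t, t)))) (at t)"
proof -
  note along = smooth_on2_along_path[OF _ x \<psi>]
  have r: "\<psi> t \<noteq> 0" using radius_pos[OF x] by simp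
  have p: "u (\<psi> t, t) + c * \<rho> (\<psi> t, t) \<noteq> 0" and q: "u (\<psi> t, t) - c * \<rho> (\<psi> t, t) \<noteq> 0"
    using non_sonic[OF x] by auto
  note identity = riemann_gradient_transport_identity[OF r p q mass_eq[OF x, unfolded fst_conv]
      momentum_eq[OF x] mass_eq_d_r[OF x, unfolded fst_conv] momentum_eq_d_r[OF x]
      critical[unfolded riemann_gradient_def fst_conv]]
  note derivative = has_real_derivative_gradient_form[OF along[OF smooth_first_partials(3)]
      along[OF smooth_first_partials(1)] along[OF smooth_density] along[OF smooth_velocity]
      DERIV_add[OF along[OF smooth_velocity] DERIV_cmult[OF along[OF smooth_density]]] \<psi> r p]
  from DERIV_cong[OF derivative identity] show ?thesis
    unfolding riemann_gradient_def fst_conv .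
qed

lemma derivative_along_characteristic:
  assumes m: "m > 0"
    and F: "\<forall>x\<in>\<Omega>. F x = riemann_gradient m c \<rho> u x"
    and G: "\<forall>x\<in>\<Omega>. G x = riemann_gradient m (- c) \<rho> u x"
    and v: "\<forall>x\<in>\<Omega>. v x = u x + c * \<rho> x"
    and curve: "char_curve \<Omega> v r0 I \<psi>" "{t-\<epsilon><..<t+\<epsilon>} \<subseteq> I" "\<epsilon> > 0"
    and critical: "F (\<psi> t, t) = 0"
  obtains k where "(\<psi> t, t) \<in> \<Omega>" "k > 0"
    "((\<lambda>s. F (\<psi> s, s)) has_real_derivative k * (v (\<psi> t, t) * G (\<psi> t, t))) (at t)"
proof -
  have on_curve: "(\<psi> s, s) \<in> \<Omega>" if "s \<in> {t-\<epsilon><..<t+\<epsilon>}" for s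
    using curve(1,2) that unfolding char_curve_def by blast
  then have x: "(\<psi> t, t) \<in> \<Omega>" using curve(3) by simp
  then have p: "u (\<psi> t, t) + c * \<rho> (\<psi> t, t) \<noteq> 0"
    using non_sonic by blast
  have "(\<psi> has_real_derivative u (\<psi> t, t) + c * \<rho> (\<psi> t, t)) (at t)"
    using char_curve_has_real_derivative[OF curve] v x by simp
  note transport = riemann_gradient_transport[OF x this critical[unfolded F[rule_format, OF x]]]
  define k where "k = real m * (u (\<psi> t, t) - c * \<rho> (\<psi> t, t))\<^sup>2 / (2 * \<psi> t * (v (\<psi> t, t))\<^sup>2)"
  have "k > 0" using m radius_pos[OF x] non_sonic[OF x] v x by (simp add: k_def)
  have rescale: "a * w / (2 * r * p) = a / (2 * r * p\<^sup>2) * (p * w)" if "p \<noteq> 0" for a w r p :: real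
    using that by (simp add: field_simps power2_eq_square)
  from rescale[OF p, of "real m * (u (\<psi> t, t) - c * \<rho> (\<psi> t, t))\<^sup>2"]
  have "((\<lambda>s. riemann_gradient m c \<rho> u (\<psi> s, s)) has_real_derivative
      k * (v (\<psi> t, t) * G (\<psi> t, t))) (at t)"
    using DERIV_cong[OF transport] G v x by (simp add: k_def)
  then have "((\<lambda>s. F (\<psi> s, s)) has_real_derivative k * (v (\<psi> t, t) * G (\<psi> t, t))) (at t)"
    by (rule has_field_derivative_transform_within_open[OF _ open_greaterThanLessThan[of "t-\<epsilon>" "t+\<epsilon>"]])
      (use curve(3) on_curve F in auto)
  with x \<open>k > 0\<close> that show ?thesis by blast
qed

lemma sign_change_along_characteristic:
  assumes "m > 0"
    and "\<forall>x\<in>\<Omega>. F x = riemann_gradient m c \<rho> u x"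
    and "\<forall>x\<in>\<Omega>. G x = riemann_gradient m (- c) \<rho> u x"
    and "\<forall>x\<in>\<Omega>. v x = u x + c * \<rho> x"
    and curve: "char_curve \<Omega> v r0 I \<psi>" "{t-\<epsilon><..<t+\<epsilon>} \<subseteq> I"
  shows "R_to_C (\<lambda>s. F (\<psi> s, s)) t \<epsilon> \<Longrightarrow> (\<psi> t, t) \<in> \<Omega> \<and> v (\<psi> t, t) * G (\<psi> t, t) \<le> 0"
    and "C_to_R (\<lambda>s. F (\<psi> s, s)) t \<epsilon> \<Longrightarrow> (\<psi> t, t) \<in> \<Omega> \<and> v (\<psi> t, t) * G (\<psi> t, t) \<ge> 0"
proof -
  assume change: "R_to_C (\<lambda>s. F (\<psi> s, s)) t \<epsilon>"
  then have "\<epsilon> > 0" "F (\<psi> t, t) = 0" by (simp_all add: R_to_C_def)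
  with assms obtain k where "(\<psi> t, t) \<in> \<Omega>" "k > 0"
    and "((\<lambda>s. F (\<psi> s, s)) has_real_derivative k * (v (\<psi> t, t) * G (\<psi> t, t))) (at t)"
    by (rule derivative_along_characteristic)
  moreover from R_to_C_deriv_nonpos[OF change this(3)] this(2)
  have "v (\<psi> t, t) * G (\<psi> t, t) \<le> 0"
    by (simp add: mult_le_0_iff)
  ultimately show "(\<psi> t, t) \<in> \<Omega> \<and> v (\<psi> t, t) * G (\<psi> t, t) \<le> 0" by blast
next
  assume change: "C_to_R (\<lambda>s. F (\<psi> s, s)) t \<epsilon>"
  then have "\<epsilon> > 0" "F (\<psi> t, t) = 0" by (simp_all add: C_to_R_def)
  with assms obtain k where "(\<psi> t, t) \<in> \<Omega>" "k > 0"
    and "((\<lambda>s. F (\<psi> s, s)) has_real_derivative k * (v (\<psi> t, t) * G (\<psi> t, t))) (at t)"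
    by (rule derivative_along_characteristic)
  moreover from C_to_R_deriv_nonneg[OF change this(3)] this(2)
  have "v (\<psi> t, t) * G (\<psi> t, t) \<ge> 0"
    by (simp add: zero_le_mult_iff)
  ultimately show "(\<psi> t, t) \<in> \<Omega> \<and> v (\<psi> t, t) * G (\<psi> t, t) \<ge> 0" by blast
qed

end

theorem mainTheorem4:
  fixes m :: nat and K :: real and \<Omega> :: "(real \<times> real) set"
    and \<rho> u :: "real \<times> real \<Rightarrow> real"
  assumes hm: "m \<in> {1, 2}"
    and hK: "K > 0"
    and hopen: "open \<Omega>"
    and hr: "\<forall>x\<in>\<Omega>. fst x > 0"
    and hrho: "\<forall>x\<in>\<Omega>. \<rho> x > 0"
    and hsmooth: "smooth_on2 \<Omega> \<rho>" "smooth_on2 \<Omega> u"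
    and heq: "euler_radial m K 3 \<Omega> \<rho> u"
    and hsub: "\<forall>x\<in>\<Omega>. c1 K 3 \<rho> u x < 0 \<and> 0 < c2 K 3 \<rho> u x"
  shows
    "(\<forall>r0 I \<psi> t \<epsilon>. char_curve \<Omega> (c2 K 3 \<rho> u) r0 I \<psi> \<and> {t-\<epsilon><..<t+\<epsilon>} \<subseteq> I
        \<and> beta m K 3 \<rho> u (\<psi> t, t) > 0
        \<longrightarrow> \<not> R_to_C (\<lambda>s. alpha m K 3 \<rho> u (\<psi> s, s)) t \<epsilon>)
   \<and> (\<forall>r0 I \<psi> t \<epsilon>. char_curve \<Omega> (c2 K 3 \<rho> u) r0 I \<psi> \<and> {t-\<epsilon><..<t+\<epsilon>} \<subseteq> I
        \<and> beta m K 3 \<rho> u (\<psi> t, t) < 0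
        \<longrightarrow> \<not> C_to_R (\<lambda>s. alpha m K 3 \<rho> u (\<psi> s, s)) t \<epsilon>)
   \<and> (\<forall>r0 I \<xi> t \<epsilon>. char_curve \<Omega> (c1 K 3 \<rho> u) r0 I \<xi> \<and> {t-\<epsilon><..<t+\<epsilon>} \<subseteq> I
        \<and> alpha m K 3 \<rho> u (\<xi> t, t) > 0
        \<longrightarrow> \<not> C_to_R (\<lambda>s. beta m K 3 \<rho> u (\<xi> s, s)) t \<epsilon>)
   \<and> (\<forall>r0 I \<xi> t \<epsilon>. char_curve \<Omega> (c1 K 3 \<rho> u) r0 I \<xi> \<and> {t-\<epsilon><..<t+\<epsilon>} \<subseteq> I
        \<and> alpha m K 3 \<rho> u (\<xi> t, t) < 0
        \<longrightarrow> \<not> R_to_C (\<lambda>s. beta m K 3 \<rho> u (\<xi> s, s)) t \<epsilon>)"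
proof -
  define s where "s = sqrt (K * 3)"
  note coefficients = gamma3_wave_coefficients[OF hopen hrho hsmooth(1), where K = K, folded s_def]
  have speed: "s\<^sup>2 = 3 * K"
    and subsonic: "\<forall>x\<in>\<Omega>. u x + s * \<rho> x \<noteq> 0 \<and> u x - s * \<rho> x \<noteq> 0"
    using hK hsub coefficients(3,4) by (auto simp: s_def)
  interpret wave2: euler_gamma3_solution m K s \<Omega> \<rho> u
    using speed subsonic hopen hr hrho hsmooth heq by unfold_locales auto
  interpret wave1: euler_gamma3_solution m K "- s" \<Omega> \<rho> u
    using speed subsonic hopen hr hrho hsmooth heq by unfold_locales auto
  have "m > 0" using hm by auto
  note wave2_change = wave2.sign_change_along_characteristic[OF this coefficients(1,2,3)]
  have "\<forall>x\<in>\<Omega>. alpha m K 3 \<rho> u x = riemann_gradient m (- (- s)) \<rho> u x"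
    using coefficients(1) by simp
  note wave1_change = wave1.sign_change_along_characteristic[OF \<open>m > 0\<close> coefficients(2) this coefficients(4)]
  show ?thesis
    using hsub by (intro conjI allI impI notI; elim conjE)
      (force dest: wave2_change wave1_change simp: mult_le_0_iff zero_le_mult_iff)+
qed

end
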